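(* Let $a,b\in\mathbb{R}^n$. (a) Let $r>0$ and $p\in(1,2]$. Then for all $a,b\in\mathbb{B}(0;r)$, $$\langle \|a\|^{p-2}a-\|b\|^{p-2}b,\ a-b\rangle\ \ge\ \kappa_p\, r^{p-2}\,\|a-b\|^2 .$$ (b) Let $r>0$, $p\ge 2$ and $s=\frac{p}{p-1}$. Then for all $a,b\in\mathbb{B}(0;r)$, $$\big\|\,\|a\|^{p-2}a-\|b\|^{p-2}b\,\big\|\ \le\ \frac{2r^{p-2}}{\kappa_s}\,\|a-b\| .$$
   Context: $\|\cdot\|$ is the Euclidean norm on $\mathbb{R}^n$ and $\mathbb{B}(0;r)$ the open ball of radius $r$ about the origin. The convention $\|0\|^{p-2}\,0=0$ is used (also for $p<2$). The function $\kappa:(1,2]\to(0,\infty)$, $t\mapsto\kappa_t$, is defined by $\kappa_t=\frac{(2+\sqrt3)(t-1)}{16}$ for $t\in(1,\hat t]$, $\kappa_t=\frac{2+\sqrt3}{16}\big(1-(3-\sqrt3)^{1-t}\big)$ for $t\in[\hat t,2)$, and $\kappa_2=1$, where $\hat t\approx 1.3214$ is the solution in $(1,2]$ of $\frac{t(t-1)}{2}=1-\Big[1+\frac{(2-\sqrt3)t}{t-1}\Big]^{1-t}$. *)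

theory Defs
  imports "HOL-Analysis.Analysis"
begin

definition t_hat :: real where
  "t_hat = (THE t. 1 < t \<and> t \<le> 2 \<and>
     t * (t - 1) / 2 = 1 - (1 + (2 - sqrt 3) * t / (t - 1)) powr (1 - t))"

definition kappa :: "real \<Rightarrow> real" where
  "kappa t = (if t = 2 then 1
     else if t \<le> t_hat then (2 + sqrt 3) * (t - 1) / 16
     else (2 + sqrt 3) / 16 * (1 - (3 - sqrt 3) powr (1 - t)))"

end

theory Submission
  imports Defs
begin

text \<open>Write \<open>u = norm a\<close> and \<open>v = norm b\<close>. In both inequalities the difference of the two
  sides is affine in \<open>a \<bullet> b\<close>, which by Cauchy--Schwarz ranges over \<open>[-u * v, u * v]\<close>; so it
  suffices to treat \<open>b\<close> parallel and antiparallel to \<open>a\<close>, where everything reduces to the scalar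
  function \<open>x powr (p - 1)\<close> on \<open>[0, r]\<close>. Its derivative \<open>(p - 1) * x powr (p - 2)\<close> is at least
  \<open>(p - 1) * r powr (p - 2)\<close> when \<open>p \<le> 2\<close> and at most that when \<open>p \<ge> 2\<close>, which gives both
  inequalities with the constant \<open>(p - 1) * r powr (p - 2)\<close>. This beats the stated constants
  because \<open>0 < kappa t \<le> t - 1\<close>; for \<open>s = p / (p - 1)\<close> this says \<open>p - 1 \<le> 1 / kappa s\<close>.\<close>

lemma affine_nonneg_on_symmetric_interval:
  fixes c m \<alpha> \<beta> :: real
  assumes "\<bar>c\<bar> \<le> m" "0 \<le> \<alpha> + \<beta> * m" "0 \<le> \<alpha> - \<beta> * m"
  shows "0 \<le> \<alpha> + \<beta> * c"
proof (cases "\<beta> \<ge> 0")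
  case True
  then have "\<beta> * (- m) \<le> \<beta> * c" using assms(1) by (intro mult_left_mono) auto
  then show ?thesis using assms by simp
next
  case False
  then have "\<beta> * m \<le> \<beta> * c" using assms(1) by (intro mult_left_mono_neg) auto
  then show ?thesis using assms by simp
qed

lemma inner_scaleR_diff_ge_if_collinear:
  fixes a b :: "'a::real_inner" and U V K :: real
  defines "u \<equiv> norm a" and "v \<equiv> norm b"
  assumes parallel: "K * (u - v)\<^sup>2 \<le> (U * u - V * v) * (u - v)"
    and antiparallel: "K * (u + v)\<^sup>2 \<le> (U * u + V * v) * (u + v)"
  shows "K * (norm (a - b))\<^sup>2 \<le> (U *\<^sub>R a - V *\<^sub>R b) \<bullet> (a - b)"
proof -
  define c where "c = a \<bullet> b"
  have lhs: "(norm (a - b))\<^sup>2 = u\<^sup>2 + v\<^sup>2 - 2 * c"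
    and rhs: "(U *\<^sub>R a - V *\<^sub>R b) \<bullet> (a - b) = U * u\<^sup>2 + V * v\<^sup>2 - (U + V) * c"
    unfolding u_def v_def c_def power2_norm_eq_inner
    by (simp_all add: inner_diff_left inner_diff_right inner_commute algebra_simps)
  have "\<bar>c\<bar> \<le> u * v"
    unfolding u_def v_def c_def by (rule Cauchy_Schwarz_ineq2)
  then have "0 \<le> (U * u\<^sup>2 + V * v\<^sup>2 - K * (u\<^sup>2 + v\<^sup>2)) + (2 * K - (U + V)) * c"
    by (rule affine_nonneg_on_symmetric_interval)
      (use parallel antiparallel in \<open>simp_all add: power2_eq_square algebra_simps\<close>)
  then show ?thesis unfolding lhs rhs by (simp add: algebra_simps)
qed

lemma norm_scaleR_diff_le_if_collinear:
  fixes a b :: "'a::real_inner" and U V L :: real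
  defines "u \<equiv> norm a" and "v \<equiv> norm b"
  assumes "0 \<le> L"
    and parallel: "(U * u - V * v)\<^sup>2 \<le> L\<^sup>2 * (u - v)\<^sup>2"
    and antiparallel: "(U * u + V * v)\<^sup>2 \<le> L\<^sup>2 * (u + v)\<^sup>2"
  shows "norm (U *\<^sub>R a - V *\<^sub>R b) \<le> L * norm (a - b)"
proof (rule power2_le_imp_le)
  define c where "c = a \<bullet> b"
  have lhs: "(norm (U *\<^sub>R a - V *\<^sub>R b))\<^sup>2 = U\<^sup>2 * u\<^sup>2 + V\<^sup>2 * v\<^sup>2 - 2 * (U * V) * c"
    and rhs: "(L * norm (a - b))\<^sup>2 = L\<^sup>2 * (u\<^sup>2 + v\<^sup>2 - 2 * c)"
    unfolding u_def v_def c_def power2_norm_eq_inner power_mult_distrib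
    by (simp_all add: inner_diff_left inner_diff_right inner_commute algebra_simps power2_eq_square)
  have "\<bar>c\<bar> \<le> u * v"
    unfolding u_def v_def c_def by (rule Cauchy_Schwarz_ineq2)
  then have "0 \<le> (L\<^sup>2 * (u\<^sup>2 + v\<^sup>2) - U\<^sup>2 * u\<^sup>2 - V\<^sup>2 * v\<^sup>2) + (2 * (U * V) - 2 * L\<^sup>2) * c"
    by (rule affine_nonneg_on_symmetric_interval)
      (use parallel antiparallel in \<open>simp_all add: power2_eq_square algebra_simps\<close>)
  then show "(norm (U *\<^sub>R a - V *\<^sub>R b))\<^sup>2 \<le> (L * norm (a - b))\<^sup>2"
    unfolding lhs rhs by (simp add: algebra_simps)
  show "0 \<le> L * norm (a - b)" using \<open>0 \<le> L\<close> by simp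
qed

lemma powr_increment_ge:
  fixes p r u v :: real
  assumes p: "1 < p" "p \<le> 2" and uv: "0 \<le> v" "v \<le> u" "u \<le> r"
  shows "(p - 1) * r powr (p - 2) * (u - v) \<le> u powr (p - 1) - v powr (p - 1)"
proof -
  define K where "K = (p - 1) * r powr (p - 2)"
  have "v powr (p - 1) - K * v \<le> u powr (p - 1) - K * u"
  proof (rule DERIV_nonneg_imp_increasing_open[OF \<open>v \<le> u\<close>])
    fix x assume x: "v < x" "x < u"
    have "DERIV (\<lambda>x. x powr (p - 1) - K * x) x :> (p - 1) * x powr (p - 1 - 1) - K"
      using x uv by (auto intro!: derivative_eq_intros)
    moreover have "r powr (p - 2) \<le> x powr (p - 2)"
      using x uv p by (intro powr_mono2') auto
    then have "K \<le> (p - 1) * x powr (p - 1 - 1)"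
      using p by (auto simp: K_def intro: mult_left_mono)
    ultimately show "\<exists>y. DERIV (\<lambda>x. x powr (p - 1) - K * x) x :> y \<and> 0 \<le> y"
      by auto
  next
    show "continuous_on {v..u} (\<lambda>x. x powr (p - 1) - K * x)"
      using p uv by (intro continuous_intros continuous_on_powr') auto
  qed
  then show ?thesis by (simp add: K_def algebra_simps)
qed

lemma powr_increment_le:
  fixes p r u v :: real
  assumes p: "2 \<le> p" and uv: "0 \<le> v" "v \<le> u" "u \<le> r"
  shows "u powr (p - 1) - v powr (p - 1) \<le> (p - 1) * r powr (p - 2) * (u - v)"
proof -
  define L where "L = (p - 1) * r powr (p - 2)"
  have "u powr (p - 1) - L * u \<le> v powr (p - 1) - L * v"
  proof (rule DERIV_nonpos_imp_decreasing_open[OF \<open>v \<le> u\<close>])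
    fix x assume x: "v < x" "x < u"
    have "DERIV (\<lambda>x. x powr (p - 1) - L * x) x :> (p - 1) * x powr (p - 1 - 1) - L"
      using x uv by (auto intro!: derivative_eq_intros)
    moreover have "x powr (p - 2) \<le> r powr (p - 2)"
      using x uv p by (intro powr_mono2) auto
    then have "(p - 1) * x powr (p - 1 - 1) \<le> L"
      using p by (auto simp: L_def intro: mult_left_mono)
    ultimately show "\<exists>y. DERIV (\<lambda>x. x powr (p - 1) - L * x) x :> y \<and> y \<le> 0"
      by auto
  next
    show "continuous_on {v..u} (\<lambda>x. x powr (p - 1) - L * x)"
      using p uv by (intro continuous_intros continuous_on_powr') auto
  qed
  then show ?thesis by (simp add: L_def algebra_simps)
qed

lemma powr_minus_two_mult_self: "0 \<le> x \<Longrightarrow> x powr (p - 2) * x = x powr (p - 1)"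
  for x p :: real
  using powr_mult_base[of x "p - 2"] by (simp add: mult.commute)

lemma inner_powr_scaled_diff_ge:
  fixes a b :: "'a::real_inner" and p r :: real
  assumes p: "1 < p" "p \<le> 2" and ab: "norm a \<le> r" "norm b \<le> r"
  shows "(p - 1) * r powr (p - 2) * (norm (a - b))\<^sup>2
           \<le> ((norm a powr (p - 2)) *\<^sub>R a - (norm b powr (p - 2)) *\<^sub>R b) \<bullet> (a - b)"
proof -
  define K u v where "K = (p - 1) * r powr (p - 2)" and "u = norm a" and "v = norm b"
  have uv: "0 \<le> u" "0 \<le> v" "u \<le> r" "v \<le> r" using ab by (auto simp: u_def v_def)
  have increment:
    "K * (y - x) \<le> y powr (p - 1) - x powr (p - 1)" if "0 \<le> x" "x \<le> y" "y \<le> r" for x y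
    using powr_increment_ge[OF p that] by (simp add: K_def)
  have "K * (u - v)\<^sup>2 \<le> (u powr (p - 1) - v powr (p - 1)) * (u - v)"
  proof (cases "v \<le> u")
    case True
    then show ?thesis
      using mult_right_mono[OF increment[OF uv(2) True uv(3)], of "u - v"]
      by (simp add: power2_eq_square)
  next
    case False
    then show ?thesis
      using mult_right_mono[OF increment[OF uv(1) _ uv(4)], of "v - u"]
      by (simp add: power2_eq_square algebra_simps)
  qed
  moreover have "K * (u + v)\<^sup>2 \<le> (u powr (p - 1) + v powr (p - 1)) * (u + v)"
  proof -
    have "K * (u + v) \<le> u powr (p - 1) + v powr (p - 1)"
      using increment[of 0 u] increment[of 0 v] uv by (simp add: algebra_simps)
    from mult_right_mono[OF this, of "u + v"] show ?thesis
      using uv by (simp add: power2_eq_square mult.assoc)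
  qed
  ultimately show ?thesis
    using inner_scaleR_diff_ge_if_collinear[of K a b "norm a powr (p - 2)" "norm b powr (p - 2)"]
    by (simp add: u_def v_def K_def powr_minus_two_mult_self)
qed

lemma norm_powr_scaled_diff_le:
  fixes a b :: "'a::real_inner" and p r :: real
  assumes p: "2 \<le> p" and ab: "norm a \<le> r" "norm b \<le> r"
  shows "norm ((norm a powr (p - 2)) *\<^sub>R a - (norm b powr (p - 2)) *\<^sub>R b)
           \<le> (p - 1) * r powr (p - 2) * norm (a - b)"
proof -
  define L u v where "L = (p - 1) * r powr (p - 2)" and "u = norm a" and "v = norm b"
  have uv: "0 \<le> u" "0 \<le> v" "u \<le> r" "v \<le> r" using ab by (auto simp: u_def v_def)
  have "0 \<le> L" using p by (simp add: L_def)
  have increment: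
    "y powr (p - 1) - x powr (p - 1) \<le> L * (y - x)" if "0 \<le> x" "x \<le> y" "y \<le> r" for x y
    using powr_increment_le[OF p that] by (simp add: L_def)
  have mono: "x powr (p - 1) \<le> y powr (p - 1)" if "0 \<le> x" "x \<le> y" for x y
    using that p by (intro powr_mono2) auto
  have "\<bar>u powr (p - 1) - v powr (p - 1)\<bar> \<le> L * \<bar>u - v\<bar>"
  proof (cases "v \<le> u")
    case True
    then show ?thesis using increment[OF uv(2) True uv(3)] mono[OF uv(2) True] by simp
  next
    case False
    then show ?thesis using increment[OF uv(1) _ uv(4)] mono[OF uv(1)] by simp
  qed
  from power_mono[OF this abs_ge_zero, of 2]
  have "(u powr (p - 1) - v powr (p - 1))\<^sup>2 \<le> L\<^sup>2 * (u - v)\<^sup>2"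
    by (simp add: power_mult_distrib)
  moreover have "(u powr (p - 1) + v powr (p - 1))\<^sup>2 \<le> L\<^sup>2 * (u + v)\<^sup>2"
  proof -
    have "u powr (p - 1) + v powr (p - 1) \<le> L * (u + v)"
      using increment[of 0 u] increment[of 0 v] uv by (simp add: algebra_simps)
    from power_mono[OF this, of 2] show ?thesis
      by (simp add: power_mult_distrib)
  qed
  ultimately show ?thesis
    using norm_scaleR_diff_le_if_collinear[OF \<open>0 \<le> L\<close>,
        of "norm a powr (p - 2)" a "norm b powr (p - 2)" b]
    by (simp add: u_def v_def L_def powr_minus_two_mult_self)
qed

text \<open>Only the crude bounds \<open>0 < kappa t \<le> t - 1\<close> are needed, so the value of \<^const>\<open>t_hat\<close>
  (a definite description) never matters.\<close>

lemma sqrt_3_bounds: "1 < sqrt 3" "sqrt 3 < 2"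
proof -
  have "sqrt 1 < sqrt 3" "sqrt 3 < sqrt 4" by (simp_all only: real_sqrt_less_iff)
  then show "1 < sqrt 3" "sqrt 3 < 2" by simp_all
qed

lemma kappa_pos:
  assumes "1 < t" "t \<le> 2"
  shows "0 < kappa t"
proof -
  have "(3 - sqrt 3) powr (1 - t) < 1"
    using sqrt_3_bounds assms by (intro powr_less_one) auto
  moreover have "0 < 2 + sqrt 3" by (simp add: add_pos_nonneg)
  ultimately show ?thesis
    using assms by (auto simp: kappa_def)
qed

lemma kappa_le:
  assumes "1 < t" "t \<le> 2"
  shows "kappa t \<le> t - 1"
proof -
  define c where "c = 3 - sqrt 3"
  have c: "1 < c" "c < 2" using sqrt_3_bounds by (auto simp: c_def)
  have "1 + (1 - t) * ln c \<le> exp ((1 - t) * ln c)" by (rule exp_ge_add_one_self)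
  also have "\<dots> = c powr (1 - t)" using c by (simp add: powr_def)
  finally have "1 - c powr (1 - t) \<le> (t - 1) * ln c" by (simp add: algebra_simps)
  also have "\<dots> \<le> t - 1"
    using ln_le_minus_one[of c] c assms by (auto intro: mult_left_le)
  finally have increment: "1 - c powr (1 - t) \<le> t - 1" .
  have "c powr (1 - t) < 1"
    using c assms by (intro powr_less_one) auto
  have factor: "(2 + sqrt 3) / 16 \<le> 1" using sqrt_3_bounds by simp
  have "(2 + sqrt 3) / 16 * (1 - c powr (1 - t)) \<le> 1 * (t - 1)"
    using \<open>c powr (1 - t) < 1\<close> by (intro mult_mono factor increment) auto
  moreover have "(2 + sqrt 3) * (t - 1) / 16 \<le> t - 1"
    using mult_right_mono[OF factor, of "t - 1"] assms by simp
  ultimately show ?thesis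
    using assms unfolding kappa_def c_def by auto
qed

theorem lemma2:
  fixes r p :: real
  shows "(r > 0 \<and> 1 < p \<and> p \<le> 2 \<longrightarrow>
            (\<forall>a \<in> ball (0::real^'n) r. \<forall>b \<in> ball 0 r.
               ((norm a powr (p - 2)) *\<^sub>R a - (norm b powr (p - 2)) *\<^sub>R b) \<bullet> (a - b)
                 \<ge> kappa p * r powr (p - 2) * (norm (a - b))\<^sup>2))
       \<and> (r > 0 \<and> p \<ge> 2 \<longrightarrow>
            (let s = p / (p - 1) in
             \<forall>a \<in> ball (0::real^'n) r. \<forall>b \<in> ball 0 r.
               norm ((norm a powr (p - 2)) *\<^sub>R a - (norm b powr (p - 2)) *\<^sub>R b)
                 \<le> 2 * r powr (p - 2) / kappa s * norm (a - b)))"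
proof (intro conjI impI)
  assume "r > 0 \<and> 1 < p \<and> p \<le> 2"
  then have p: "1 < p" "p \<le> 2" by auto
  have K: "kappa p * r powr (p - 2) \<le> (p - 1) * r powr (p - 2)"
    using kappa_le[OF p] by (simp add: mult_right_mono)
  show "\<forall>a \<in> ball (0::real^'n) r. \<forall>b \<in> ball 0 r.
      ((norm a powr (p - 2)) *\<^sub>R a - (norm b powr (p - 2)) *\<^sub>R b) \<bullet> (a - b)
        \<ge> kappa p * r powr (p - 2) * (norm (a - b))\<^sup>2"
    by (auto intro!: order_trans[OF mult_right_mono[OF K] inner_powr_scaled_diff_ge[OF p]])
next
  assume "r > 0 \<and> p \<ge> 2"
  then have p: "2 \<le> p" by auto
  define s where "s = p / (p - 1)"
  have s: "1 < s" "s \<le> 2" using p by (auto simp: s_def field_simps)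
  have "kappa s \<le> 1 / (p - 1)" using kappa_le[OF s] p by (simp add: s_def field_simps)
  then have "p - 1 \<le> 2 / kappa s" using kappa_pos[OF s] p by (simp add: field_simps)
  then have L: "(p - 1) * r powr (p - 2) \<le> 2 * r powr (p - 2) / kappa s"
    using mult_right_mono[of "p - 1" "2 / kappa s" "r powr (p - 2)"] by simp
  show "let s = p / (p - 1) in \<forall>a \<in> ball (0::real^'n) r. \<forall>b \<in> ball 0 r.
      norm ((norm a powr (p - 2)) *\<^sub>R a - (norm b powr (p - 2)) *\<^sub>R b)
        \<le> 2 * r powr (p - 2) / kappa s * norm (a - b)"
    unfolding Let_def s_def[symmetric]
    by (intro ballI order_trans[OF norm_powr_scaled_diff_le[OF p] mult_right_mono[OF L]]) auto
qed

end
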